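(* Let $S$ be a set of Boolean relations such that (i) every relation in $S$ is bijunctive, (ii) $S$ contains a relation which is not $\mathsf{F}$-valid, (iii) $S$ contains a relation which is not $\mathsf{T}$-valid, and (iv) $[x \neq y] \in Rep_{NC}(S)$. Then one of the following holds: (a) $Rep_{NC}(S)$ contains all bijunctive relations; (b) $S \subseteq Rep_{NC}(\{[x],[x\neq y]\})$.
   Context: $\mathbb{B} = \{\mathsf{F},\mathsf{T}\}$; $[\varphi]$ is the relation of tuples satisfying $\varphi$; $[x] = \{\mathsf{T}\}$. A relation is bijunctive if it is $[\varphi]$ for a conjunction $\varphi$ of clauses with at most 2 literals; $i$-valid if $(i,\dots,i)\in R$. For a set $S$ of relations, $Rep_{NC}(S)$ is the set of relations $[\theta]$ for $\theta$ of the form $(\exists \vec x)\bigwedge_{i<n} R_i(\vec x,\vec y)$ with $R_i\in S$ (existentially quantified finite conjunctions of atoms from $S$, without constants). *)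

theory Defs
  imports Main
begin

text \<open>A Boolean relation is given by its arity n together with a set of tuples
  (bool lists); False plays the role of F and True of T.\<close>
type_synonym brel = "nat \<times> bool list set"

definition wf_rel :: "brel \<Rightarrow> bool" where
  "wf_rel R \<longleftrightarrow> (\<forall>t\<in>snd R. length t = fst R)"

definition valid :: "bool \<Rightarrow> brel \<Rightarrow> bool" where
  "valid i R \<longleftrightarrow> replicate (fst R) i \<in> snd R"

text \<open>A literal is (variable index, polarity); a clause is a list of literals
  (satisfied if some literal holds); a formula is a list of clauses (conjunction).\<close>
type_synonym literal = "nat \<times> bool"
type_synonym clause = "literal list"

definition sat_clause :: "bool list \<Rightarrow> clause \<Rightarrow> bool" where
  "sat_clause t c \<longleftrightarrow> (\<exists>(i, b)\<in>set c. t ! i = b)"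

definition cnf_rel :: "nat \<Rightarrow> clause list \<Rightarrow> brel" where
  "cnf_rel n phi = (n, {t. length t = n \<and> (\<forall>c\<in>set phi. sat_clause t c)})"

definition bijunctive :: "brel \<Rightarrow> bool" where
  "bijunctive R \<longleftrightarrow> (\<exists>phi. (\<forall>c\<in>set phi. length c \<le> 2 \<and> (\<forall>(i, b)\<in>set c. i < fst R))
                            \<and> R = cnf_rel (fst R) phi)"

text \<open>[theta] for theta = (exists x_1..x_k). conj of atoms R(v), where free variables
  y_0..y_{m-1} are indices 0..m-1 and bound variables are indices m..m+k-1.\<close>
definition pp_rel :: "nat \<Rightarrow> nat \<Rightarrow> (brel \<times> nat list) list \<Rightarrow> brel" where
  "pp_rel m k atoms = (m, {y. length y = m \<and>
      (\<exists>x. length x = k \<and> (\<forall>(R, vs)\<in>set atoms. map (\<lambda>j. (y @ x) ! j) vs \<in> snd R))})"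

definition RepNC :: "brel set \<Rightarrow> brel set" where
  "RepNC S = {pp_rel m k atoms | m k atoms.
      \<forall>(R, vs)\<in>set atoms. R \<in> S \<and> length vs = fst R \<and> (\<forall>j\<in>set vs. j < m + k)}"

definition rel_T :: brel where "rel_T = (1, {[True]})"
definition rel_neq :: brel where "rel_neq = (2, {[False, True], [True, False]})"

end

(*
  A nonempty bijunctive relation is the conjunction of its binary projections, and
  pp-definability is transitive, so everything reduces to defining binary relations.
  If some relation of S has a binary projection with exactly three pairs, that projection
  is a clause x \<noteq> a \<or> y \<noteq> b; negating arguments with [x \<noteq> y] then yields every
  2-clause and hence every binary relation. Otherwise each binary projection has 0, 1, 2
  or 4 pairs and is an intersection of constraints x = c, y = c, x = y and x \<noteq> y, all
  definable from [x] and [x \<noteq> y].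
*)
theory Submission
  imports Defs
begin

definition atoms_hold :: "(brel \<times> nat list) list \<Rightarrow> (nat \<Rightarrow> bool) \<Rightarrow> bool" where
  "atoms_hold atoms \<sigma> \<longleftrightarrow> (\<forall>(R, vs)\<in>set atoms. map \<sigma> vs \<in> snd R)"

definition atoms_vars :: "(brel \<times> nat list) list \<Rightarrow> nat set" where
  "atoms_vars atoms = (\<Union>(R, vs)\<in>set atoms. set vs)"

definition atoms_over :: "brel set \<Rightarrow> (brel \<times> nat list) list \<Rightarrow> bool" where
  "atoms_over S atoms \<longleftrightarrow> (\<forall>(R, vs)\<in>set atoms. R \<in> S \<and> length vs = fst R)"

text \<open>Like pp_rel, but all variables from m on are existentially quantified, so the number
  of quantified variables need not be fixed in advance.\<close>
definition defined_rel :: "nat \<Rightarrow> (brel \<times> nat list) list \<Rightarrow> brel" where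
  "defined_rel m atoms = (m, {map \<sigma> [0..<m] | \<sigma>. atoms_hold atoms \<sigma>})"

lemma mem_defined_rel: "y \<in> snd (defined_rel m atoms) \<longleftrightarrow> (\<exists>\<sigma>. y = map \<sigma> [0..<m] \<and> atoms_hold atoms \<sigma>)"
  unfolding defined_rel_def by (simp only: snd_conv mem_Collect_eq)

lemma fst_defined_rel [simp]: "fst (defined_rel m atoms) = m"
  unfolding defined_rel_def by simp

lemma atoms_hold_append [simp]: "atoms_hold (xs @ ys) \<sigma> \<longleftrightarrow> atoms_hold xs \<sigma> \<and> atoms_hold ys \<sigma>"
  unfolding atoms_hold_def by auto

lemma atoms_hold_Cons [simp]: "atoms_hold ((R, vs) # atoms) \<sigma> \<longleftrightarrow> map \<sigma> vs \<in> snd R \<and> atoms_hold atoms \<sigma>"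
  unfolding atoms_hold_def by auto

lemma atoms_hold_Nil [simp]: "atoms_hold [] \<sigma>"
  unfolding atoms_hold_def by auto

lemma atoms_hold_rename:
  "atoms_hold (map (\<lambda>(R, ws). (R, map f ws)) atoms) \<sigma> \<longleftrightarrow> atoms_hold atoms (\<sigma> \<circ> f)"
  unfolding atoms_hold_def by auto

lemma atoms_hold_cong:
  assumes "\<forall>v\<in>atoms_vars atoms. \<sigma> v = \<tau> v"
  shows "atoms_hold atoms \<sigma> \<longleftrightarrow> atoms_hold atoms \<tau>"
proof -
  have "map \<sigma> vs = map \<tau> vs" if "(R, vs) \<in> set atoms" for R vs
  proof (rule map_cong[OF refl])
    fix v assume "v \<in> set vs"
    then have "v \<in> atoms_vars atoms" using that unfolding atoms_vars_def by blast
    then show "\<sigma> v = \<tau> v" using assms by blast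
  qed
  then show ?thesis unfolding atoms_hold_def by (metis (no_types, lifting) case_prodI2 case_prodD)
qed

lemma atoms_vars_bounded: "\<exists>N. m \<le> N \<and> (\<forall>v\<in>atoms_vars atoms. v < N)"
proof -
  have "finite (atoms_vars atoms)" unfolding atoms_vars_def by auto
  then obtain N where "\<forall>v\<in>atoms_vars atoms. v < N" using finite_nat_set_iff_bounded by blast
  then show ?thesis by (intro exI[of _ "max m N"]) (simp add: less_max_iff_disj)
qed

lemma pp_rel_eq_defined_rel:
  assumes "\<forall>(R, vs)\<in>set atoms. \<forall>j\<in>set vs. j < m + k"
  shows "pp_rel m k atoms = defined_rel m atoms"
proof -
  have mem_pp_rel: "y \<in> snd (pp_rel m k atoms)
      \<longleftrightarrow> length y = m \<and> (\<exists>x. length x = k \<and> atoms_hold atoms (\<lambda>j. (y @ x) ! j))" for y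
    unfolding pp_rel_def atoms_hold_def by simp
  have "y \<in> snd (pp_rel m k atoms) \<longleftrightarrow> y \<in> snd (defined_rel m atoms)" for y
  proof
    assume "y \<in> snd (pp_rel m k atoms)"
    then obtain x where y: "length y = m" and "atoms_hold atoms (\<lambda>j. (y @ x) ! j)"
      unfolding mem_pp_rel by blast
    moreover have "y = map (\<lambda>j. (y @ x) ! j) [0..<m]"
      using y by (intro nth_equalityI) (auto simp: nth_append)
    ultimately show "y \<in> snd (defined_rel m atoms)" unfolding mem_defined_rel by blast
  next
    assume "y \<in> snd (defined_rel m atoms)"
    then obtain \<sigma> where y: "y = map \<sigma> [0..<m]" and h: "atoms_hold atoms \<sigma>"
      unfolding mem_defined_rel by (elim exE conjE)
    define x where "x = map \<sigma> [m..<m + k]"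
    have yx: "y @ x = map \<sigma> [0..<m + k]"
      unfolding y x_def upt_add_eq_append[OF le0] by simp
    have "\<forall>v\<in>atoms_vars atoms. (y @ x) ! v = \<sigma> v"
      using assms unfolding yx atoms_vars_def by fastforce
    then have "atoms_hold atoms (\<lambda>j. (y @ x) ! j)" using h atoms_hold_cong by blast
    then show "y \<in> snd (pp_rel m k atoms)"
      unfolding mem_pp_rel by (intro conjI exI[of _ x]) (simp_all add: y x_def)
  qed
  then have "snd (pp_rel m k atoms) = snd (defined_rel m atoms)" by blast
  then show ?thesis by (simp add: prod_eq_iff pp_rel_def defined_rel_def)
qed

lemma mem_RepNC_iff: "R \<in> RepNC S \<longleftrightarrow> (\<exists>m atoms. atoms_over S atoms \<and> R = defined_rel m atoms)"
proof
  assume "R \<in> RepNC S"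
  then obtain m k atoms where "R = pp_rel m k atoms"
    and a: "\<forall>(R, vs)\<in>set atoms. R \<in> S \<and> length vs = fst R \<and> (\<forall>j\<in>set vs. j < m + k)"
    unfolding RepNC_def by blast
  then have "R = defined_rel m atoms" using pp_rel_eq_defined_rel[of atoms m k] by fastforce
  moreover have "atoms_over S atoms" using a unfolding atoms_over_def by fastforce
  ultimately show "\<exists>m atoms. atoms_over S atoms \<and> R = defined_rel m atoms" by blast
next
  assume "\<exists>m atoms. atoms_over S atoms \<and> R = defined_rel m atoms"
  then obtain m atoms where over: "atoms_over S atoms" and R: "R = defined_rel m atoms" by blast
  obtain k where "\<forall>v\<in>atoms_vars atoms. v < k" using atoms_vars_bounded by blast
  then have bnd: "\<forall>(R, vs)\<in>set atoms. R \<in> S \<and> length vs = fst R \<and> (\<forall>j\<in>set vs. j < m + k)"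
    using over unfolding atoms_over_def atoms_vars_def by fastforce
  then have "R = pp_rel m k atoms" using R pp_rel_eq_defined_rel[of atoms m k] by fastforce
  then show "R \<in> RepNC S" unfolding RepNC_def using bnd by blast
qed

lemma defined_rel_in_RepNC: "atoms_over S atoms \<Longrightarrow> defined_rel m atoms \<in> RepNC S"
  using mem_RepNC_iff by blast

lemma RepNC_base:
  assumes "R \<in> S" "wf_rel R"
  shows "R \<in> RepNC S"
proof -
  have "y \<in> snd (defined_rel (fst R) [(R, [0..<fst R])]) \<longleftrightarrow> y \<in> snd R" for y
  proof
    assume "y \<in> snd R"
    moreover have "length y = fst R" using assms(2) \<open>y \<in> snd R\<close> unfolding wf_rel_def by blast
    ultimately have "y = map (\<lambda>j. y ! j) [0..<fst R] \<and> atoms_hold [(R, [0..<fst R])] (\<lambda>j. y ! j)"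
      by (metis atoms_hold_Cons atoms_hold_Nil map_nth)
    then show "y \<in> snd (defined_rel (fst R) [(R, [0..<fst R])])"
      unfolding mem_defined_rel by blast
  qed (auto simp: mem_defined_rel)
  then have "defined_rel (fst R) [(R, [0..<fst R])] = R" by (simp add: prod_eq_iff set_eq_iff)
  moreover have "atoms_over S [(R, [0..<fst R])]" using assms(1) by (simp add: atoms_over_def)
  ultimately show ?thesis using defined_rel_in_RepNC by metis
qed

text \<open>The free variables of A become the arguments of the replaced atom, its quantified
  variables are moved above all variables in use.\<close>
lemma defined_rel_subst_atom:
  assumes len: "length vs = r"
    and fresh: "m \<le> N" "\<forall>v\<in>atoms_vars (xs @ (defined_rel r A, vs) # ys). v < N"
  defines "ren \<equiv> \<lambda>v. if v < r then vs ! v else N + v"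
  shows "defined_rel m (xs @ (defined_rel r A, vs) # ys)
       = defined_rel m (xs @ map (\<lambda>(R, ws). (R, map ren ws)) A @ ys)"
proof -
  have below_N: "\<forall>v\<in>atoms_vars xs \<union> atoms_vars ys \<union> set vs. v < N"
    using fresh(2) by (auto simp: atoms_vars_def)
  have "(\<exists>\<sigma>. y = map \<sigma> [0..<m] \<and> atoms_hold (xs @ (defined_rel r A, vs) # ys) \<sigma>)
    \<longleftrightarrow> (\<exists>\<sigma>. y = map \<sigma> [0..<m] \<and> atoms_hold (xs @ map (\<lambda>(R, ws). (R, map ren ws)) A @ ys) \<sigma>)"
    for y
  proof
    assume "\<exists>\<sigma>. y = map \<sigma> [0..<m] \<and> atoms_hold (xs @ (defined_rel r A, vs) # ys) \<sigma>"
    then obtain \<sigma> \<tau> where y: "y = map \<sigma> [0..<m]" and xs: "atoms_hold xs \<sigma>"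
      and ys: "atoms_hold ys \<sigma>" and \<tau>: "map \<sigma> vs = map \<tau> [0..<r]" "atoms_hold A \<tau>"
      by (auto simp: defined_rel_def)
    define \<sigma>' where "\<sigma>' v = (if v < N then \<sigma> v else \<tau> (v - N))" for v
    have "(\<sigma>' \<circ> ren) v = \<tau> v" for v
    proof (cases "v < r")
      case True
      then have "\<sigma> (vs ! v) = \<tau> v" using \<tau>(1) len by (metis diff_zero length_upt nth_map nth_upt add_0)
      then show ?thesis using below_N len True by (simp add: ren_def \<sigma>'_def)
    qed (simp add: ren_def \<sigma>'_def)
    then have "\<sigma>' \<circ> ren = \<tau>" ..
    moreover have "atoms_hold xs \<sigma>'" "atoms_hold ys \<sigma>'"
      using xs ys below_N atoms_hold_cong[of _ \<sigma>' \<sigma>] by (auto simp: \<sigma>'_def)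
    moreover have "y = map \<sigma>' [0..<m]" using y fresh(1) by (simp add: \<sigma>'_def)
    ultimately show "\<exists>\<sigma>. y = map \<sigma> [0..<m] \<and> atoms_hold (xs @ map (\<lambda>(R, ws). (R, map ren ws)) A @ ys) \<sigma>"
      using \<tau>(2) by (auto simp: atoms_hold_rename)
  next
    assume "\<exists>\<sigma>. y = map \<sigma> [0..<m] \<and> atoms_hold (xs @ map (\<lambda>(R, ws). (R, map ren ws)) A @ ys) \<sigma>"
    then obtain \<sigma> where "y = map \<sigma> [0..<m]" "atoms_hold xs \<sigma>" "atoms_hold ys \<sigma>"
      and A: "atoms_hold A (\<sigma> \<circ> ren)"
      by (auto simp: atoms_hold_rename)
    moreover have "map \<sigma> vs = map (\<sigma> \<circ> ren) [0..<r]"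
      using len by (intro nth_equalityI) (auto simp: ren_def)
    ultimately show "\<exists>\<sigma>. y = map \<sigma> [0..<m] \<and> atoms_hold (xs @ (defined_rel r A, vs) # ys) \<sigma>"
      by (auto simp: defined_rel_def)
  qed
  then show ?thesis unfolding defined_rel_def by simp
qed

lemma RepNC_closed:
  assumes "atoms_over (RepNC S) atoms"
  shows "defined_rel m atoms \<in> RepNC S"
proof -
  have "atoms_over S xs \<Longrightarrow> defined_rel m (xs @ atoms) \<in> RepNC S" for xs
    using assms
  proof (induction atoms arbitrary: xs)
    case Nil
    then show ?case using defined_rel_in_RepNC by simp
  next
    case (Cons atom ys)
    obtain R vs where atom: "atom = (R, vs)" by fastforce
    then have "R \<in> RepNC S" and len: "length vs = fst R" and ys: "atoms_over (RepNC S) ys"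
      using Cons.prems(2) by (auto simp: atoms_over_def)
    then obtain r A where A: "atoms_over S A" and R: "R = defined_rel r A"
      using mem_RepNC_iff by blast
    obtain N where fresh: "m \<le> N" "\<forall>v\<in>atoms_vars (xs @ (defined_rel r A, vs) # ys). v < N"
      using atoms_vars_bounded by blast
    have r: "length vs = r" using len R by simp
    define ren where "ren = (\<lambda>v. if v < r then vs ! v else N + v)"
    have "atoms_over S (xs @ map (\<lambda>(R, ws). (R, map ren ws)) A)"
      using Cons.prems(1) A by (auto simp: atoms_over_def)
    then have "defined_rel m ((xs @ map (\<lambda>(R, ws). (R, map ren ws)) A) @ ys) \<in> RepNC S"
      using Cons.IH ys by blast
    then show ?case
      using defined_rel_subst_atom[OF r fresh] atom R by (simp add: ren_def)
  qed
  from this[of "[]"] show ?thesis by (simp add: atoms_over_def)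
qed

definition pair_rel :: "(bool \<times> bool) set \<Rightarrow> brel" where
  "pair_rel X = (2, {[p, q] | p q. (p, q) \<in> X})"

lemma Cons_Cons_mem_pair_rel [simp]: "[p, q] \<in> snd (pair_rel X) \<longleftrightarrow> (p, q) \<in> X"
  unfolding pair_rel_def by auto

lemma rel_neq_eq_pair_rel: "rel_neq = pair_rel {(p, q). p \<noteq> q}"
  unfolding rel_neq_def pair_rel_def by (auto intro!: set_eqI)

lemma defined_rel_eq_pair_rel:
  assumes "\<And>p q. (\<exists>\<sigma>. \<sigma> 0 = p \<and> \<sigma> 1 = q \<and> atoms_hold atoms \<sigma>) \<longleftrightarrow> (p, q) \<in> X"
  shows "defined_rel 2 atoms = pair_rel X"
proof -
  have map_upt_2: "map \<sigma> [0..<2] = [\<sigma> 0, \<sigma> 1]" for \<sigma> :: "nat \<Rightarrow> bool"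
    by (simp add: upt_rec)
  have "y \<in> snd (defined_rel 2 atoms) \<longleftrightarrow> y \<in> snd (pair_rel X)" for y
  proof
    assume "y \<in> snd (defined_rel 2 atoms)"
    then obtain \<sigma> where y: "y = [\<sigma> 0, \<sigma> 1]" and "atoms_hold atoms \<sigma>"
      unfolding mem_defined_rel map_upt_2 by (elim exE conjE)
    then have "(\<sigma> 0, \<sigma> 1) \<in> X" using assms[of "\<sigma> 0" "\<sigma> 1"] by blast
    then show "y \<in> snd (pair_rel X)" by (simp add: y)
  next
    assume "y \<in> snd (pair_rel X)"
    then obtain p q where "y = [p, q]" "(p, q) \<in> X" unfolding pair_rel_def by auto
    moreover obtain \<sigma> where "\<sigma> 0 = p" "\<sigma> 1 = q" "atoms_hold atoms \<sigma>"
      using assms[of p q] \<open>(p, q) \<in> X\<close> by blast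
    ultimately show "y \<in> snd (defined_rel 2 atoms)" unfolding mem_defined_rel map_upt_2 by auto
  qed
  then show ?thesis by (simp add: prod_eq_iff set_eq_iff pair_rel_def)
qed

lemma defined_rel_eq_pair_rel_quantifier_free:
  assumes "\<And>\<sigma>. atoms_hold atoms \<sigma> \<longleftrightarrow> (\<sigma> 0, \<sigma> 1) \<in> X"
  shows "defined_rel 2 atoms = pair_rel X"
proof (rule defined_rel_eq_pair_rel)
  fix p q
  show "(\<exists>\<sigma>. \<sigma> 0 = p \<and> \<sigma> 1 = q \<and> atoms_hold atoms \<sigma>) \<longleftrightarrow> (p, q) \<in> X"
  proof
    assume "\<exists>\<sigma>. \<sigma> 0 = p \<and> \<sigma> 1 = q \<and> atoms_hold atoms \<sigma>"
    then obtain \<sigma> where "\<sigma> 0 = p" "\<sigma> 1 = q" "atoms_hold atoms \<sigma>" by (elim exE conjE)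
    then show "(p, q) \<in> X" using assms[of \<sigma>] by simp
  next
    assume "(p, q) \<in> X"
    then have "atoms_hold atoms (\<lambda>v. if v = 0 then p else q)" using assms by simp
    then show "\<exists>\<sigma>. \<sigma> 0 = p \<and> \<sigma> 1 = q \<and> atoms_hold atoms \<sigma>"
      by (intro exI[of _ "\<lambda>v. if v = 0 then p else q"]) simp
  qed
qed

lemma pair_rel_Inter_in_RepNC:
  assumes "\<forall>Y\<in>\<Y>. pair_rel Y \<in> RepNC S"
  shows "pair_rel (\<Inter>\<Y>) \<in> RepNC S"
proof -
  obtain Ys where Ys: "set Ys = \<Y>" using finite_list[of \<Y>] by auto
  define atoms :: "(brel \<times> nat list) list" where "atoms = map (\<lambda>Y. (pair_rel Y, [0, 1])) Ys"
  have "atoms_hold atoms \<sigma> \<longleftrightarrow> (\<sigma> 0, \<sigma> 1) \<in> \<Inter>\<Y>" for \<sigma>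
    by (auto simp: atoms_def atoms_hold_def Ys[symmetric])
  then have "defined_rel 2 atoms = pair_rel (\<Inter>\<Y>)"
    by (rule defined_rel_eq_pair_rel_quantifier_free)
  moreover have "atoms_over (RepNC S) atoms"
    using assms by (auto simp: atoms_over_def atoms_def Ys pair_rel_def)
  ultimately show ?thesis using RepNC_closed by metis
qed

definition pair_lit :: "bool \<Rightarrow> bool \<Rightarrow> bool \<times> bool \<Rightarrow> bool" where
  "pair_lit k b pq \<longleftrightarrow> (if k then snd pq else fst pq) = b"

text \<open>Variables 2 and 3 are forced to be the negations of the free variables 0 and 1, so every
  literal over the free variables is the value of one of the variables 0 to 3.\<close>
lemma pair_rel_lit_preimage_in_RepNC:
  assumes "pair_rel X \<in> RepNC S" "rel_neq \<in> RepNC S"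
  shows "pair_rel {pq. (pair_lit k b pq, pair_lit k' b' pq) \<in> X} \<in> RepNC S"
proof -
  define lit_var :: "bool \<Rightarrow> bool \<Rightarrow> nat" where
    "lit_var k b = (if k then if b then 1 else 3 else if b then 0 else 2)" for k b
  define atoms where
    "atoms = [(rel_neq, [0, 2]), (rel_neq, [1, 3]), (pair_rel X, [lit_var k b, lit_var k' b'])]"
  have lit: "\<sigma> (lit_var k b) = pair_lit k b (\<sigma> 0, \<sigma> 1)" if "\<sigma> 2 \<noteq> \<sigma> 0" "\<sigma> 3 \<noteq> \<sigma> 1" for \<sigma> k b
    using that by (cases k; cases b) (auto simp: lit_var_def pair_lit_def)
  have "(\<exists>\<sigma>. \<sigma> 0 = p \<and> \<sigma> 1 = q \<and> atoms_hold atoms \<sigma>)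
    \<longleftrightarrow> (pair_lit k b (p, q), pair_lit k' b' (p, q)) \<in> X" for p q
  proof
    assume "\<exists>\<sigma>. \<sigma> 0 = p \<and> \<sigma> 1 = q \<and> atoms_hold atoms \<sigma>"
    then obtain \<sigma> where "\<sigma> 0 = p" "\<sigma> 1 = q" "\<sigma> 2 \<noteq> \<sigma> 0" "\<sigma> 3 \<noteq> \<sigma> 1"
      and "(\<sigma> (lit_var k b), \<sigma> (lit_var k' b')) \<in> X"
      by (auto simp: atoms_def rel_neq_eq_pair_rel)
    then show "(pair_lit k b (p, q), pair_lit k' b' (p, q)) \<in> X"
      using lit[of \<sigma> k b] lit[of \<sigma> k' b'] by simp
  next
    define \<sigma> :: "nat \<Rightarrow> bool" where
      "\<sigma> v = (if v = 0 then p else if v = 1 then q else if v = 2 then \<not> p else \<not> q)" for v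
    assume "(pair_lit k b (p, q), pair_lit k' b' (p, q)) \<in> X"
    then have "\<sigma> 0 = p \<and> \<sigma> 1 = q \<and> atoms_hold atoms \<sigma>"
      using lit[of \<sigma>] by (simp add: \<sigma>_def atoms_def rel_neq_eq_pair_rel)
    then show "\<exists>\<sigma>. \<sigma> 0 = p \<and> \<sigma> 1 = q \<and> atoms_hold atoms \<sigma>" by blast
  qed
  then have "defined_rel 2 atoms = pair_rel {pq. (pair_lit k b pq, pair_lit k' b' pq) \<in> X}"
    by (intro defined_rel_eq_pair_rel) simp
  moreover have "atoms_over (RepNC S) atoms"
    using assms by (simp add: atoms_over_def atoms_def rel_neq_def pair_rel_def)
  ultimately show ?thesis using RepNC_closed by metis
qed

definition pair_proj :: "brel \<Rightarrow> nat \<Rightarrow> nat \<Rightarrow> (bool \<times> bool) set" where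
  "pair_proj R i j = {(t ! i, t ! j) | t. t \<in> snd R}"

lemma pair_rel_pair_proj_in_RepNC:
  assumes R: "R \<in> RepNC S" "wf_rel R" and ij: "i < fst R" "j < fst R" "i \<noteq> j"
  shows "pair_rel (pair_proj R i j) \<in> RepNC S"
proof -
  define vs where "vs = map (\<lambda>l. if l = i then 0 else if l = j then 1 else l + 2) [0..<fst R]"
  have "(\<exists>\<sigma>. \<sigma> 0 = p \<and> \<sigma> 1 = q \<and> atoms_hold [(R, vs)] \<sigma>) \<longleftrightarrow> (p, q) \<in> pair_proj R i j"
    for p q
  proof
    assume "\<exists>\<sigma>. \<sigma> 0 = p \<and> \<sigma> 1 = q \<and> atoms_hold [(R, vs)] \<sigma>"
    then obtain \<sigma> where pq: "\<sigma> 0 = p" "\<sigma> 1 = q" and "atoms_hold [(R, vs)] \<sigma>"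
      by (elim exE conjE)
    then have mem: "(map \<sigma> vs ! i, map \<sigma> vs ! j) \<in> pair_proj R i j"
      unfolding pair_proj_def by auto
    have "map \<sigma> vs ! i = p" "map \<sigma> vs ! j = q"
      using ij pq by (simp_all add: vs_def)
    with mem show "(p, q) \<in> pair_proj R i j" by (simp only:)
  next
    assume "(p, q) \<in> pair_proj R i j"
    then obtain t where t: "t \<in> snd R" "t ! i = p" "t ! j = q" unfolding pair_proj_def by blast
    then have len: "length t = fst R" using R(2) unfolding wf_rel_def by blast
    define \<sigma> where "\<sigma> v = (if v = 0 then p else if v = 1 then q else t ! (v - 2))" for v
    have "map \<sigma> vs ! l = t ! l" if "l < fst R" for l
      using that t(2,3) by (simp add: vs_def \<sigma>_def)
    then have "map \<sigma> vs = t" using len by (intro nth_equalityI) (simp_all add: vs_def)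
    then have "\<sigma> 0 = p \<and> \<sigma> 1 = q \<and> atoms_hold [(R, vs)] \<sigma>" using t(1) by (simp add: \<sigma>_def)
    then show "\<exists>\<sigma>. \<sigma> 0 = p \<and> \<sigma> 1 = q \<and> atoms_hold [(R, vs)] \<sigma>" by blast
  qed
  then have "defined_rel 2 [(R, vs)] = pair_rel (pair_proj R i j)"
    by (rule defined_rel_eq_pair_rel)
  moreover have "atoms_over (RepNC S) [(R, vs)]" using R(1) by (simp add: atoms_over_def vs_def)
  ultimately show ?thesis using RepNC_closed by metis
qed

lemma card_pair_proj_diag: "card (pair_proj R i i) \<le> 2"
proof -
  have "pair_proj R i i \<subseteq> {(False, False), (True, True)}"
    unfolding pair_proj_def by (auto intro: bool.exhaust)
  then have "card (pair_proj R i i) \<le> card {(False, False), (True, True)}"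
    by (rule card_mono[rotated]) simp
  then show ?thesis by simp
qed

lemma card_Compl_pair_set: "card (- X) = 4 - card (X :: (bool \<times> bool) set)"
proof -
  have "card (UNIV :: (bool \<times> bool) set) = 4"
    by (simp add: UNIV_Times_UNIV[symmetric] card_cartesian_product del: UNIV_Times_UNIV)
  then show ?thesis by (simp add: Compl_eq_Diff_UNIV card_Diff_subset)
qed

lemma card_pair_set_eq_3:
  assumes "card X = 3"
  obtains e where "X = - {e :: bool \<times> bool}"
proof -
  have "card (- X) = 1" using card_Compl_pair_set[of X] assms by simp
  then have "\<exists>e. - X = {e}" using card_1_singleton_iff[of "- X"] by (simp only: One_nat_def)
  then obtain e where "- X = {e}" ..
  then show ?thesis using that by (metis double_complement)
qed

lemma card_pair_set_neq_3:
  assumes "card X \<noteq> 3" "e \<notin> X"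
  shows "\<exists>e'. e' \<notin> X \<and> e' \<noteq> (e :: bool \<times> bool)"
proof (rule ccontr)
  assume "\<not> ?thesis"
  then have "- X = {e}" using assms(2) by blast
  then show False using card_Compl_pair_set[of X] assms(1) by simp
qed

lemma sat_clause_cong:
  assumes "\<forall>l\<in>set c. s ! fst l = t ! fst l"
  shows "sat_clause s c \<longleftrightarrow> sat_clause t c"
  unfolding sat_clause_def
proof (rule bex_cong[OF refl])
  fix l assume "l \<in> set c"
  then show "(case l of (i, b) \<Rightarrow> s ! i = b) \<longleftrightarrow> (case l of (i, b) \<Rightarrow> t ! i = b)"
    using assms by (cases l) auto
qed

lemma bijunctive_mem_iff_pair_proj:
  assumes wf: "wf_rel R" and bij: "bijunctive R" and ne: "snd R \<noteq> {}"
  shows "t \<in> snd R \<longleftrightarrow> length t = fst R \<and> (\<forall>i<fst R. \<forall>j<fst R. (t ! i, t ! j) \<in> pair_proj R i j)"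
proof
  assume "t \<in> snd R"
  then show "length t = fst R \<and> (\<forall>i<fst R. \<forall>j<fst R. (t ! i, t ! j) \<in> pair_proj R i j)"
    using wf unfolding wf_rel_def pair_proj_def by blast
next
  assume t: "length t = fst R \<and> (\<forall>i<fst R. \<forall>j<fst R. (t ! i, t ! j) \<in> pair_proj R i j)"
  obtain phi where phi: "\<forall>c\<in>set phi. length c \<le> 2 \<and> (\<forall>(i, b)\<in>set c. i < fst R)"
    and R: "R = cnf_rel (fst R) phi"
    using bij unfolding bijunctive_def by blast
  have mem_R: "s \<in> snd R \<longleftrightarrow> length s = fst R \<and> (\<forall>c\<in>set phi. sat_clause s c)" for s
    by (subst R) (simp add: cnf_rel_def)
  obtain s0 where s0: "s0 \<in> snd R" using ne by blast
  have "sat_clause t c" if c: "c \<in> set phi" for c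
  proof -
    have "c \<noteq> []" using s0 c mem_R by (force simp: sat_clause_def)
    then have sub: "set c \<subseteq> {hd c, last c}" using phi c
      by (cases c rule: remdups_adj.cases) auto
    have bound: "fst l < fst R" if "l \<in> set c" for l
      using phi c that by (cases l) auto
    have "fst (hd c) < fst R" "fst (last c) < fst R"
      using \<open>c \<noteq> []\<close> by (simp_all add: bound)
    then obtain s where s: "s \<in> snd R" "s ! fst (hd c) = t ! fst (hd c)"
      "s ! fst (last c) = t ! fst (last c)"
      using t unfolding pair_proj_def by blast
    have "s ! fst l = t ! fst l" if l: "l \<in> set c" for l
    proof -
      consider "l = hd c" | "l = last c" using sub l by blast
      then show ?thesis by cases (simp_all add: s)
    qed
    moreover have "sat_clause s c" using s(1) c mem_R by blast
    ultimately show ?thesis using sat_clause_cong by blast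
  qed
  then show "t \<in> snd R" using mem_R t by blast
qed

lemma bijunctive_in_RepNC_if_pair_rels:
  assumes wf: "wf_rel R" and bij: "bijunctive R" and neq: "rel_neq \<in> RepNC S"
    and proj: "\<forall>i<fst R. \<forall>j<fst R. pair_rel (pair_proj R i j) \<in> RepNC S"
  shows "R \<in> RepNC S"
proof (cases "snd R = {}")
  case True
  have "snd (defined_rel (fst R) [(rel_neq, [0, 0])]) = {}"
    unfolding rel_neq_eq_pair_rel by (auto simp: mem_defined_rel)
  then have "defined_rel (fst R) [(rel_neq, [0, 0])] = R"
    using True by (simp add: prod_eq_iff)
  moreover have "atoms_over (RepNC S) [(rel_neq, [0, 0])]"
    using neq by (simp add: atoms_over_def rel_neq_def)
  ultimately show ?thesis using RepNC_closed by metis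
next
  case False
  define atoms where
    "atoms = [(pair_rel (pair_proj R i j), [i, j]). i \<leftarrow> [0..<fst R], j \<leftarrow> [0..<fst R]]"
  have hold_iff: "atoms_hold atoms \<sigma> \<longleftrightarrow> (\<forall>i<fst R. \<forall>j<fst R. (\<sigma> i, \<sigma> j) \<in> pair_proj R i j)"
    for \<sigma>
    unfolding atoms_def atoms_hold_def by auto
  have "y \<in> snd (defined_rel (fst R) atoms) \<longleftrightarrow> y \<in> snd R" for y
  proof
    assume "y \<in> snd (defined_rel (fst R) atoms)"
    then obtain \<sigma> where y: "y = map \<sigma> [0..<fst R]" and "atoms_hold atoms \<sigma>"
      unfolding mem_defined_rel by (elim exE conjE)
    then show "y \<in> snd R"
      unfolding bijunctive_mem_iff_pair_proj[OF wf bij False] hold_iff by (simp add: y)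
  next
    assume "y \<in> snd R"
    then have "length y = fst R" "atoms_hold atoms (\<lambda>i. y ! i)"
      unfolding bijunctive_mem_iff_pair_proj[OF wf bij False] hold_iff by simp_all
    then show "y \<in> snd (defined_rel (fst R) atoms)"
      unfolding mem_defined_rel by (metis map_nth)
  qed
  then have "defined_rel (fst R) atoms = R" by (simp add: prod_eq_iff set_eq_iff)
  moreover have "atoms_over (RepNC S) atoms"
    using proj by (auto simp: atoms_over_def atoms_def pair_rel_def)
  ultimately show ?thesis using RepNC_closed by metis
qed

lemma pair_rel_in_RepNC_if_Compl_singleton:
  assumes B: "pair_rel (- {(a, b)}) \<in> RepNC S" and neq: "rel_neq \<in> RepNC S"
  shows "pair_rel X \<in> RepNC S"
proof -
  have "pair_rel (- {e}) \<in> RepNC S" for e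
  proof -
    obtain c d where e: "e = (c, d)" by fastforce
    have "- {e} = {pq. (pair_lit False (c = a) pq, pair_lit True (d = b) pq) \<in> - {(a, b)}}"
      unfolding e pair_lit_def by auto
    then show ?thesis using pair_rel_lit_preimage_in_RepNC[OF B neq] by simp
  qed
  moreover have "X = \<Inter>{- {e} | e. e \<notin> X}" by auto
  ultimately show ?thesis using pair_rel_Inter_in_RepNC[of "{- {e} | e. e \<notin> X}" S] by auto
qed

lemma pair_rel_in_RepNC_if_T_neq:
  assumes T: "rel_T \<in> RepNC S" and neq: "rel_neq \<in> RepNC S" and card: "card X \<noteq> 3"
  shows "pair_rel X \<in> RepNC S"
proof -
  have "defined_rel 2 [(rel_T, [0])] = pair_rel {pq. fst pq}"
    by (rule defined_rel_eq_pair_rel_quantifier_free) (auto simp: rel_T_def)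
  moreover have "atoms_over (RepNC S) [(rel_T, [0])]" using T by (simp add: atoms_over_def rel_T_def)
  ultimately have fst_T: "pair_rel {pq. fst pq} \<in> RepNC S" using RepNC_closed by metis
  have neq': "pair_rel {(p, q). p \<noteq> q} \<in> RepNC S" using neq by (simp add: rel_neq_eq_pair_rel)
  have doubleton: "pair_rel (- {e, e'}) \<in> RepNC S" if "e \<noteq> e'" for e e'
  proof -
    obtain a b c d where e: "e = (a, b)" "e' = (c, d)" by fastforce
    consider "a = c" | "b = d" | "c = (\<not> a)" "d = (\<not> b)" by blast
    then show ?thesis
    proof cases
      case 1
      then have "- {e, e'} = {pq. (pair_lit False (\<not> a) pq, pair_lit False (\<not> a) pq) \<in> {pq. fst pq}}"
        using that unfolding e pair_lit_def by auto
      then show ?thesis using pair_rel_lit_preimage_in_RepNC[OF fst_T neq] by simp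
    next
      case 2
      then have "- {e, e'} = {pq. (pair_lit True (\<not> b) pq, pair_lit True (\<not> b) pq) \<in> {pq. fst pq}}"
        using that unfolding e pair_lit_def by auto
      then show ?thesis using pair_rel_lit_preimage_in_RepNC[OF fst_T neq] by simp
    next
      case 3
      then have "- {e, e'} = {pq. (pair_lit False a pq, pair_lit True b pq) \<in> {(p, q). p \<noteq> q}}"
        unfolding e pair_lit_def by auto
      then show ?thesis using pair_rel_lit_preimage_in_RepNC[OF neq' neq] by simp
    qed
  qed
  define \<Y> where "\<Y> = {- {e, e'} | e e'. e \<notin> X \<and> e' \<notin> X \<and> e \<noteq> e'}"
  have "\<forall>Y\<in>\<Y>. pair_rel Y \<in> RepNC S" unfolding \<Y>_def using doubleton by blast
  moreover have "X = \<Inter>\<Y>"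
  proof
    show "X \<subseteq> \<Inter>\<Y>" unfolding \<Y>_def by blast
    show "\<Inter>\<Y> \<subseteq> X"
    proof
      fix x assume x: "x \<in> \<Inter>\<Y>"
      show "x \<in> X"
      proof (rule ccontr)
        assume "x \<notin> X"
        then obtain e' where "e' \<notin> X" "e' \<noteq> x" using card_pair_set_neq_3[OF card] by blast
        then have "- {x, e'} \<in> \<Y>" using \<open>x \<notin> X\<close> unfolding \<Y>_def by blast
        then show False using x by blast
      qed
    qed
  qed
  ultimately show ?thesis using pair_rel_Inter_in_RepNC by metis
qed

theorem mainTheorem12:
  fixes S :: "brel set"
  assumes wf: "\<forall>R\<in>S. wf_rel R"
    and bij: "\<forall>R\<in>S. bijunctive R"
    and notF: "\<exists>R\<in>S. \<not> valid False R"
    and notT: "\<exists>R\<in>S. \<not> valid True R"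
    and neq: "rel_neq \<in> RepNC S"
  shows "(\<forall>R. wf_rel R \<and> bijunctive R \<longrightarrow> R \<in> RepNC S)
         \<or> S \<subseteq> RepNC {rel_T, rel_neq}"
proof (cases "\<exists>R\<in>S. \<exists>i<fst R. \<exists>j<fst R. card (pair_proj R i j) = 3")
  case True
  then obtain R i j where R: "R \<in> S" "i < fst R" "j < fst R" and card: "card (pair_proj R i j) = 3"
    by blast
  obtain e where e: "pair_proj R i j = - {e}" using card by (rule card_pair_set_eq_3)
  have "i \<noteq> j" using card card_pair_proj_diag[of R i] by auto
  then have "pair_rel (- {e}) \<in> RepNC S"
    using pair_rel_pair_proj_in_RepNC[OF RepNC_base] R wf e by metis
  then have "\<forall>X. pair_rel X \<in> RepNC S"
    using pair_rel_in_RepNC_if_Compl_singleton neq by (metis surj_pair)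
  then show ?thesis using bijunctive_in_RepNC_if_pair_rels neq by blast
next
  case False
  have "rel_T \<in> RepNC {rel_T, rel_neq}" "rel_neq \<in> RepNC {rel_T, rel_neq}"
    by (auto intro!: RepNC_base simp: wf_rel_def rel_T_def rel_neq_def)
  then have "R \<in> RepNC {rel_T, rel_neq}" if "R \<in> S" for R
    using that False wf bij bijunctive_in_RepNC_if_pair_rels pair_rel_in_RepNC_if_T_neq by metis
  then show ?thesis by blast
qed

end
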